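(* Let $(A,\leq,\cdot,/)$ be a narhoop and $\theta$ a unital congruence on $(A,\cdot,/)$. Then: (1) $N_\theta$ is closed under $\cdot$ and $/$ (i.e. is a subnarhoop of $A$); (2) for all $x,y\in A$, if $x\leq y$ and $x\in N_\theta$ then $y\in N_\theta$; (3) $\phi(N_\theta)\subseteq N_\theta$ for every $\phi\in\mathrm{Inn}(A)$.
   Context: Write $xy$ for $x\cdot y$; $\cdot$ binds more strongly than $/$, and $/$ binds more strongly than $\sqcap$, where $x\sqcap y := (x/y)y$. A right-residuated magma is a structure $(A,\leq,\cdot,/)$ where $(A,\leq)$ is a poset and $xy\leq z\iff x\leq z/y$ for all $x,y,z\in A$. A narhoop is a right-residuated magma such that for all $x,y$: $x\leq y\iff x\sqcap y = x = y\sqcap x$. A congruence $\theta$ on $(A,\cdot,/)$ is unital if $x/x\mathrel{\theta} y/y$ for all $x,y\in A$. For a unital congruence $\theta$, $N_\theta=\{x\in A\mid x\mathrel{\theta} y/y \text{ for some (equivalently, all) } y\in A\}$. For $x,y\in A$ define maps $A\to A$ by $\phi_{1,x,y}(z)=((zx)y)/(xy)$, $\phi_{2,x,y}(z)=((zx)/y)/(x/y)$, $\phi_{3,x,y}(z)=(x(zy))/(xy)$, $\phi_{4,x,y}(z)=(x/(zy))/(x/y)$, $\phi_{5,x,y}(z)=(xy)/(x(zy))$, $\phi_{6,x,y}(z)=(x/y)/(x/(zy))$. $\mathrm{Inn}(A)$ is the semigroup of maps $A\to A$ under composition generated by all $\phi_{i,x,y}$, $i=1,\dots,6$, $x,y\in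 A$. *)

theory Defs
  imports Main
begin

text \<open>A structure (A, le, m, d) with carrier the whole type 'a: le is the order,
 m is the product (x\<cdot>y = m x y), d is the right residual (x/y = d x y).\<close>

definition meetop :: "('a \<Rightarrow> 'a \<Rightarrow> 'a) \<Rightarrow> ('a \<Rightarrow> 'a \<Rightarrow> 'a) \<Rightarrow> 'a \<Rightarrow> 'a \<Rightarrow> 'a" where
  "meetop m d x y = m (d x y) y"

definition right_residuated_magma ::
  "('a \<Rightarrow> 'a \<Rightarrow> bool) \<Rightarrow> ('a \<Rightarrow> 'a \<Rightarrow> 'a) \<Rightarrow> ('a \<Rightarrow> 'a \<Rightarrow> 'a) \<Rightarrow> bool" where
  "right_residuated_magma le m d \<longleftrightarrow>
     (\<forall>x. le x x) \<and> (\<forall>x y. le x y \<and> le y x \<longrightarrow> x = y) \<and>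
     (\<forall>x y z. le x y \<and> le y z \<longrightarrow> le x z) \<and>
     (\<forall>x y z. le (m x y) z \<longleftrightarrow> le x (d z y))"

definition narhoop ::
  "('a \<Rightarrow> 'a \<Rightarrow> bool) \<Rightarrow> ('a \<Rightarrow> 'a \<Rightarrow> 'a) \<Rightarrow> ('a \<Rightarrow> 'a \<Rightarrow> 'a) \<Rightarrow> bool" where
  "narhoop le m d \<longleftrightarrow> right_residuated_magma le m d \<and>
     (\<forall>x y. le x y \<longleftrightarrow> (meetop m d x y = x \<and> meetop m d y x = x))"

definition congruence ::
  "('a \<Rightarrow> 'a \<Rightarrow> 'a) \<Rightarrow> ('a \<Rightarrow> 'a \<Rightarrow> 'a) \<Rightarrow> ('a \<Rightarrow> 'a \<Rightarrow> bool) \<Rightarrow> bool" where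
  "congruence m d \<theta> \<longleftrightarrow> equivp \<theta> \<and>
     (\<forall>x x' y y'. \<theta> x x' \<and> \<theta> y y' \<longrightarrow> \<theta> (m x y) (m x' y') \<and> \<theta> (d x y) (d x' y'))"

definition unital_congruence ::
  "('a \<Rightarrow> 'a \<Rightarrow> 'a) \<Rightarrow> ('a \<Rightarrow> 'a \<Rightarrow> 'a) \<Rightarrow> ('a \<Rightarrow> 'a \<Rightarrow> bool) \<Rightarrow> bool" where
  "unital_congruence m d \<theta> \<longleftrightarrow> congruence m d \<theta> \<and> (\<forall>x y. \<theta> (d x x) (d y y))"

definition Nset :: "('a \<Rightarrow> 'a \<Rightarrow> 'a) \<Rightarrow> ('a \<Rightarrow> 'a \<Rightarrow> bool) \<Rightarrow> 'a set" where
  "Nset d \<theta> = {x. \<exists>y. \<theta> x (d y y)}"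

definition phi :: "('a \<Rightarrow> 'a \<Rightarrow> 'a) \<Rightarrow> ('a \<Rightarrow> 'a \<Rightarrow> 'a) \<Rightarrow> nat \<Rightarrow> 'a \<Rightarrow> 'a \<Rightarrow> 'a \<Rightarrow> 'a" where
  "phi m d i x y = (\<lambda>z.
     if i = 1 then d (m (m z x) y) (m x y)
     else if i = 2 then d (d (m z x) y) (d x y)
     else if i = 3 then d (m x (m z y)) (m x y)
     else if i = 4 then d (d x (m z y)) (d x y)
     else if i = 5 then d (m x y) (m x (m z y))
     else d (d x y) (d x (m z y)))"

inductive_set Inn :: "('a \<Rightarrow> 'a \<Rightarrow> 'a) \<Rightarrow> ('a \<Rightarrow> 'a \<Rightarrow> 'a) \<Rightarrow> ('a \<Rightarrow> 'a) set"
  for m d where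
  gen: "i \<in> {1..6} \<Longrightarrow> phi m d i x y \<in> Inn m d"
| comp: "f \<in> Inn m d \<Longrightarrow> g \<in> Inn m d \<Longrightarrow> f \<circ> g \<in> Inn m d"

end

theory Submission
  imports Defs
begin

text \<open>In a narhoop \<open>(x/x)x = x\<close>, so modulo a unital congruence every \<open>z \<in> N\<^sub>\<theta>\<close>,
  being congruent to \<open>w/w\<close>, satisfies \<open>zw \<theta> w\<close> for all \<open>w\<close>. This gives closure under the
  operations, and invariance under the inner maps: each \<open>\<phi>\<^sub>i\<^sub>,\<^sub>x\<^sub>,\<^sub>y\<close> sends \<open>z \<in> N\<^sub>\<theta>\<close> to a
  term congruent to \<open>t/t\<close>, where \<open>t\<close> is \<open>xy\<close> or \<open>x/y\<close>. Upward closure rests on the convexity of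
  congruence classes (\<open>x \<le> y \<le> z\<close> and \<open>x \<theta> z\<close> give \<open>x \<theta> y\<close>, since \<open>y = (z/y)y\<close> and
  \<open>x = (x/y)y\<close>), applied to \<open>x \<le> y \<le> (yx)/x\<close>, where \<open>(yx)/x \<theta> (yx)/(xx) = (xx)/(xx)\<close>.\<close>

lemma narhoop_le_iff_meet:
  assumes "narhoop le m d"
  shows "le x y \<longleftrightarrow> m (d x y) y = x \<and> m (d y x) x = x"
  using assms unfolding narhoop_def meetop_def by blast

lemma narhoop_residuation:
  assumes "narhoop le m d"
  shows "le (m x y) z \<longleftrightarrow> le x (d z y)"
  using assms unfolding narhoop_def right_residuated_magma_def by blast

lemma narhoop_refl:
  assumes "narhoop le m d"
  shows "le x x"
  using assms unfolding narhoop_def right_residuated_magma_def by blast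

lemma narhoop_antisym:
  assumes "narhoop le m d" and "le x y" and "le y x"
  shows "x = y"
  using assms unfolding narhoop_def right_residuated_magma_def by blast

lemma narhoop_trans:
  assumes "narhoop le m d" and "le x y" and "le y z"
  shows "le x z"
  using assms unfolding narhoop_def right_residuated_magma_def by blast

lemma narhoop_divide_self_mult:
  assumes "narhoop le m d"
  shows "m (d x x) x = x"
  using narhoop_le_iff_meet[OF assms] narhoop_refl[OF assms] by blast

lemma narhoop_le_divide_mult:
  assumes "narhoop le m d"
  shows "le x (d (m x y) y)"
  using narhoop_residuation[OF assms] narhoop_refl[OF assms] by blast

lemma narhoop_mult_right_mono:
  assumes "narhoop le m d" and "le x y"
  shows "le (m x z) (m y z)"
proof -
  have "le x (d (m y z) z)"
    using narhoop_trans[OF assms(1,2) narhoop_le_divide_mult[OF assms(1)]] .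
  then show ?thesis
    using narhoop_residuation[OF assms(1)] by blast
qed

lemma narhoop_divide_le_eq:
  assumes "narhoop le m d" and "le x y"
  shows "d y x = d x x"
proof (rule narhoop_antisym[OF assms(1)])
  have "m (d y x) x = x"
    using narhoop_le_iff_meet[OF assms(1)] assms(2) by blast
  then show "le (d y x) (d x x)"
    using narhoop_residuation[OF assms(1), of "d y x" x x] narhoop_refl[OF assms(1)] by simp
  show "le (d x x) (d y x)"
    using narhoop_residuation[OF assms(1), of "d x x" x y] assms(2)
    by (simp add: narhoop_divide_self_mult[OF assms(1)])
qed

lemma congruence_refl:
  assumes "congruence m d \<theta>"
  shows "\<theta> x x"
  using assms unfolding congruence_def by (blast intro: equivp_reflp)

lemma congruence_sym:
  assumes "congruence m d \<theta>" and "\<theta> x y"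
  shows "\<theta> y x"
  using assms unfolding congruence_def by (blast intro: equivp_symp)

lemma congruence_trans:
  assumes "congruence m d \<theta>" and "\<theta> x y" and "\<theta> y z"
  shows "\<theta> x z"
  using assms unfolding congruence_def by (blast intro: equivp_transp)

lemma congruence_mult:
  assumes "congruence m d \<theta>" and "\<theta> x x'" and "\<theta> y y'"
  shows "\<theta> (m x y) (m x' y')"
  using assms unfolding congruence_def by blast

lemma congruence_divide:
  assumes "congruence m d \<theta>" and "\<theta> x x'" and "\<theta> y y'"
  shows "\<theta> (d x y) (d x' y')"
  using assms unfolding congruence_def by blast

lemma narhoop_congruence_class_convex:
  assumes "narhoop le m d" and cong: "congruence m d \<theta>"
    and "le x y" and "le y z" and "\<theta> x z"
  shows "\<theta> x y"
proof -
  have "\<theta> (m (d x y) y) (m (d z y) y)"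
    using congruence_mult[OF cong congruence_divide[OF cong assms(5) congruence_refl[OF cong]]
        congruence_refl[OF cong]] .
  moreover have "m (d x y) y = x" and "m (d z y) y = y"
    using narhoop_le_iff_meet[OF assms(1)] assms(3,4) by blast+
  ultimately show ?thesis by simp
qed

lemma unital_congruence_congruence:
  assumes "unital_congruence m d \<theta>"
  shows "congruence m d \<theta>"
  using assms unfolding unital_congruence_def by blast

lemma unital_congruence_Nset_iff:
  assumes "unital_congruence m d \<theta>"
  shows "x \<in> Nset d \<theta> \<longleftrightarrow> \<theta> x (d w w)"
proof
  have cong: "congruence m d \<theta>"
    using unital_congruence_congruence[OF assms] .
  have units: "\<theta> (d u u) (d w w)" for u
    using assms unfolding unital_congruence_def by blast
  show "\<theta> x (d w w)" if "x \<in> Nset d \<theta>"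
    using that congruence_trans[OF cong _ units] unfolding Nset_def by blast
qed (auto simp: Nset_def)

lemma unital_congruence_Nset_cong:
  assumes U: "unital_congruence m d \<theta>" and "x \<in> Nset d \<theta>"
  shows "y \<in> Nset d \<theta> \<longleftrightarrow> \<theta> x y"
proof -
  note cong = unital_congruence_congruence[OF U]
  have x: "\<theta> x (d x x)"
    using assms(2) unital_congruence_Nset_iff[OF U] by blast
  have "y \<in> Nset d \<theta> \<longleftrightarrow> \<theta> y (d x x)"
    by (rule unital_congruence_Nset_iff[OF U])
  also have "\<dots> \<longleftrightarrow> \<theta> x y"
    using x congruence_trans[OF cong] congruence_sym[OF cong] by meson
  finally show ?thesis .
qed

lemma unital_congruence_Nset_mult_left:
  assumes U: "unital_congruence m d \<theta>" and "\<And>x. m (d x x) x = x" and "z \<in> Nset d \<theta>"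
  shows "\<theta> (m z w) w"
proof -
  note cong = unital_congruence_congruence[OF U]
  have "\<theta> z (d w w)"
    using assms(3) unital_congruence_Nset_iff[OF U] by blast
  then have "\<theta> (m z w) (m (d w w) w)"
    by (rule congruence_mult[OF cong _ congruence_refl[OF cong]])
  then show ?thesis by (simp add: assms(2))
qed

lemma unital_congruence_Nset_divide_closed:
  assumes U: "unital_congruence m d \<theta>" and "x \<in> Nset d \<theta>" and "y \<in> Nset d \<theta>"
  shows "d x y \<in> Nset d \<theta>"
proof -
  note cong = unital_congruence_congruence[OF U]
  have "\<theta> x y"
    using unital_congruence_Nset_cong[OF U] assms(2,3) by blast
  then have "\<theta> (d x y) (d y y)"
    by (rule congruence_divide[OF cong _ congruence_refl[OF cong]])
  then show ?thesis
    using unital_congruence_Nset_iff[OF U] by blast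
qed

lemma unital_congruence_Nset_mult_closed:
  assumes U: "unital_congruence m d \<theta>" and "\<And>x. m (d x x) x = x"
    and "x \<in> Nset d \<theta>" and "y \<in> Nset d \<theta>"
  shows "m x y \<in> Nset d \<theta>"
proof -
  have "\<theta> y (m x y)"
    using congruence_sym[OF unital_congruence_congruence[OF U]
        unital_congruence_Nset_mult_left[OF U assms(2,3)]] .
  then show ?thesis
    using unital_congruence_Nset_cong[OF U assms(4)] by blast
qed

lemma narhoop_Nset_upward_closed:
  assumes nar: "narhoop le m d" and U: "unital_congruence m d \<theta>"
    and "le x y" and x: "x \<in> Nset d \<theta>"
  shows "y \<in> Nset d \<theta>"
proof -
  note cong = unital_congruence_congruence[OF U]
  have "\<theta> x (m x x)"
    using congruence_sym[OF cong unital_congruence_Nset_mult_left[OF U narhoop_divide_self_mult[OF nar] x]] .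
  then have "\<theta> (d (m y x) x) (d (m y x) (m x x))"
    by (rule congruence_divide[OF cong congruence_refl[OF cong]])
  also have "d (m y x) (m x x) = d (m x x) (m x x)"
    using narhoop_divide_le_eq[OF nar] narhoop_mult_right_mono[OF nar \<open>le x y\<close>] by blast
  finally have "d (m y x) x \<in> Nset d \<theta>"
    using unital_congruence_Nset_iff[OF U] by blast
  then have "\<theta> x (d (m y x) x)"
    using unital_congruence_Nset_cong[OF U x] by blast
  then have "\<theta> x y"
    by (rule narhoop_congruence_class_convex[OF nar cong \<open>le x y\<close> narhoop_le_divide_mult[OF nar]])
  then show ?thesis
    using unital_congruence_Nset_cong[OF U x] by blast
qed

lemma unital_congruence_phi_Nset:
  assumes U: "unital_congruence m d \<theta>" and "\<And>x. m (d x x) x = x"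
    and "i \<in> {1..6}" and z: "z \<in> Nset d \<theta>"
  shows "phi m d i x y z \<in> Nset d \<theta>"
proof -
  note cong = unital_congruence_congruence[OF U]
  note refl = congruence_refl[OF cong]
  note mult = congruence_mult[OF cong] and divide = congruence_divide[OF cong]
  have zx: "\<theta> (m z x) x" and zy: "\<theta> (m z y) y"
    using unital_congruence_Nset_mult_left[OF U assms(2) z] by blast+
  have in_N: "\<theta> a (d w w) \<Longrightarrow> a \<in> Nset d \<theta>" for a w
    using unital_congruence_Nset_iff[OF U] by blast
  from assms(3) consider "i = 1" | "i = 2" | "i = 3" | "i = 4" | "i = 5" | "i = 6"
    by fastforce
  then show ?thesis
  proof cases
    case 1
    show ?thesis
      using in_N[OF divide[OF mult[OF zx refl] refl]] by (simp add: phi_def 1)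
  next
    case 2
    show ?thesis
      using in_N[OF divide[OF divide[OF zx refl] refl]] by (simp add: phi_def 2)
  next
    case 3
    show ?thesis
      using in_N[OF divide[OF mult[OF refl zy] refl]] by (simp add: phi_def 3)
  next
    case 4
    show ?thesis
      using in_N[OF divide[OF divide[OF refl zy] refl]] by (simp add: phi_def 4)
  next
    case 5
    show ?thesis
      using in_N[OF divide[OF refl mult[OF refl zy]]] by (simp add: phi_def 5)
  next
    case 6
    show ?thesis
      using in_N[OF divide[OF refl divide[OF refl zy]]] by (simp add: phi_def 6)
  qed
qed

lemma unital_congruence_Inn_Nset:
  assumes "unital_congruence m d \<theta>" and "\<And>x. m (d x x) x = x" and "f \<in> Inn m d"
  shows "f ` Nset d \<theta> \<subseteq> Nset d \<theta>"
  using assms(3)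
proof (induction rule: Inn.induct)
  case (gen i x y)
  then show ?case
    using unital_congruence_phi_Nset[OF assms(1,2)] by blast
next
  case (comp f g)
  then show ?case by (auto simp: image_subset_iff)
qed

theorem mainTheorem12:
  fixes le :: "'a \<Rightarrow> 'a \<Rightarrow> bool" and m d :: "'a \<Rightarrow> 'a \<Rightarrow> 'a"
    and \<theta> :: "'a \<Rightarrow> 'a \<Rightarrow> bool"
  assumes "narhoop le m d" and "unital_congruence m d \<theta>"
  shows "(\<forall>x\<in>Nset d \<theta>. \<forall>y\<in>Nset d \<theta>. m x y \<in> Nset d \<theta> \<and> d x y \<in> Nset d \<theta>)
    \<and> (\<forall>x y. le x y \<and> x \<in> Nset d \<theta> \<longrightarrow> y \<in> Nset d \<theta>)
    \<and> (\<forall>f\<in>Inn m d. f ` Nset d \<theta> \<subseteq> Nset d \<theta>)"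
proof -
  have unit: "\<And>x. m (d x x) x = x"
    using narhoop_divide_self_mult[OF assms(1)] .
  show ?thesis
    using unital_congruence_Nset_mult_closed[OF assms(2) unit]
      unital_congruence_Nset_divide_closed[OF assms(2)]
      narhoop_Nset_upward_closed[OF assms]
      unital_congruence_Inn_Nset[OF assms(2) unit]
    by blast
qed

end
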